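(* Let $\Omega$ be a transitive state space with finitely many extreme points, and suppose its positive cone $V_+$ is self-dual with respect to some inner product on $V$. Then there exists a linear bijection $\Xi:V\to V$ such that $\Omega':=\Xi\Omega$ is transitive and the positive cone $V'_+$ generated by $\Omega'$ is self-dual with respect to $\langle\cdot,\cdot\rangle_{GL(\Omega')}$, i.e. $V'_+=\{y\in V:\langle x,y\rangle_{GL(\Omega')}\ge0\ \forall x\in V'_+\}$.
   Context: $V=\mathbb R^{N+1}$ with Euclidean inner product $(\cdot,\cdot)_E$. A state space $\Omega\subset V$ is a compact convex set with $\mathrm{span}(\Omega)=V$ and $0\notin\mathrm{aff}(\Omega)$; $V_+=\{\lambda\omega:\lambda\ge0,\omega\in\Omega\}$. $GL(\Omega)$ is the group of linear bijections $T:V\to V$ with $T(\Omega)=\Omega$, $\mu$ its normalized Haar measure, $\langle x,y\rangle_{GL(\Omega)}=\int(Tx,Ty)_E\,d\mu(T)$. $\Omega$ is transitive if $GL(\Omega)$ acts transitively on its extreme points. For an inner product $(\cdot,\cdot)$ on $V$, the internal dual cone is $V^{*int}_{+(\cdot,\cdot)}=\{y:(x,y)\ge0\ \forall x\in V_+\}$, and $V_+$ is self-dual with respect to $(\cdot,\cdot)$ if $V_+=V^{*int}_{+(\cdot,\cdot)}$. *)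

theory Defs
  imports "HOL-Analysis.Analysis"
begin

text \<open>V is modelled by an arbitrary Euclidean space type 'a (dimension N+1 = DIM('a)),
  with Euclidean inner product the library inner product.\<close>

definition state_space :: "'a::euclidean_space set \<Rightarrow> bool" where
  "state_space \<Omega> \<longleftrightarrow> compact \<Omega> \<and> convex \<Omega> \<and> span \<Omega> = UNIV \<and> 0 \<notin> affine hull \<Omega>"

definition pos_cone :: "'a::euclidean_space set \<Rightarrow> 'a set" where
  "pos_cone \<Omega> = {c *\<^sub>R w | c w. c \<ge> 0 \<and> w \<in> \<Omega>}"

definition GLs :: "'a::euclidean_space set \<Rightarrow> ('a \<Rightarrow> 'a) set" where
  "GLs \<Omega> = {T. linear T \<and> bij T \<and> T ` \<Omega> = \<Omega>}"

definition extreme_points :: "'a::euclidean_space set \<Rightarrow> 'a set" where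
  "extreme_points \<Omega> = {x. x extreme_point_of \<Omega>}"

definition transitive_ss :: "'a::euclidean_space set \<Rightarrow> bool" where
  "transitive_ss \<Omega> \<longleftrightarrow>
     (\<forall>x\<in>extreme_points \<Omega>. \<forall>y\<in>extreme_points \<Omega>. \<exists>T\<in>GLs \<Omega>. T x = y)"

text \<open>Averaged inner product w.r.t. the normalized Haar measure of GL(Omega).
  When GL(Omega) is finite (as is the case whenever Omega has finitely many extreme
  points spanning V) the normalized Haar measure is the uniform counting measure.\<close>
definition gl_inner :: "'a::euclidean_space set \<Rightarrow> 'a \<Rightarrow> 'a \<Rightarrow> real" where
  "gl_inner \<Omega> x y = (\<Sum>T\<in>GLs \<Omega>. inner (T x) (T y)) / real (card (GLs \<Omega>))"

definition is_inner_product :: "('a::euclidean_space \<Rightarrow> 'a \<Rightarrow> real) \<Rightarrow> bool" where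
  "is_inner_product ip \<longleftrightarrow>
     (\<forall>y. linear (\<lambda>x. ip x y)) \<and> (\<forall>x y. ip x y = ip y x) \<and> (\<forall>x. x \<noteq> 0 \<longrightarrow> ip x x > 0)"

definition internal_dual_cone :: "('a::euclidean_space \<Rightarrow> 'a \<Rightarrow> real) \<Rightarrow> 'a set \<Rightarrow> 'a set" where
  "internal_dual_cone ip C = {y. \<forall>x\<in>C. ip x y \<ge> 0}"

definition self_dual :: "'a::euclidean_space set \<Rightarrow> ('a \<Rightarrow> 'a \<Rightarrow> real) \<Rightarrow> bool" where
  "self_dual \<Omega> ip \<longleftrightarrow> pos_cone \<Omega> = internal_dual_cone ip (pos_cone \<Omega>)"

end

theory Submission
  imports Defs
begin

text \<open>Orthonormalising a basis for the given inner product yields a linear bijection \<open>\<Xi>\<close> with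
  \<open>ip x y = \<langle>\<Xi> x, \<Xi> y\<rangle>\<close>, so the cone of \<open>\<Xi> \<Omega>\<close> is self-dual for the Euclidean inner product.
  For such a cone \<open>K\<close> and \<open>T \<in> GL(\<Omega>)\<close>, the positive operator \<open>T\<^sup>* T\<close> is again an
  automorphism of \<open>K\<close>, hence permutes the finitely many extreme rays; some power of it fixes the ray
  of an extreme point \<open>e\<close>, and positivity then forces \<open>T\<^sup>* T e = \<lambda> e\<close> with \<open>\<lambda> > 0\<close>.
  Averaging over the finite group \<open>GL(\<Omega>)\<close> gives \<open>\<langle>e, y\<rangle>\<^sub>G\<^sub>L = \<Lambda>\<^sub>e \<langle>e, y\<rangle>\<close> with
  \<open>\<Lambda>\<^sub>e > 0\<close> for every extreme point \<open>e\<close>; as \<open>K\<close> is generated by its extreme points, its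
  duals for the two inner products coincide.\<close>

lemma ex_inner_eq_1_if_0_notin_affine_hull:
  fixes S :: "'a::euclidean_space set"
  assumes "0 \<notin> affine hull S"
  shows "\<exists>a. \<forall>x\<in>S. inner a x = 1"
proof (cases "S = {}")
  case False
  then obtain x0 where x0: "x0 \<in> affine hull S" by (meson all_not_in_conv hull_inc)
  obtain a b where ab: "0 < b" "\<forall>x\<in>affine hull S. b < inner a x"
    using separating_hyperplane_closed_point[OF affine_imp_convex[OF affine_affine_hull]
        closed_affine_hull assms] by auto
  have const: "inner a x = inner a x0" if x: "x \<in> affine hull S" for x
  proof (rule ccontr)
    assume "inner a x \<noteq> inner a x0"
    then have d: "inner a x - inner a x0 \<noteq> 0" by simp
    \<comment> \<open>an affine function that is not constant on the affine hull takes the value \<open>b - 1\<close> there\<close>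
    define t where "t = (b - 1 - inner a x0) / (inner a x - inner a x0)"
    have "(1 - t) *\<^sub>R x0 + t *\<^sub>R x \<in> affine hull S"
      using affine_affine_hull[of S] x x0 unfolding affine_def by simp
    moreover have "inner a ((1 - t) *\<^sub>R x0 + t *\<^sub>R x) = inner a x0 + t * (inner a x - inner a x0)"
      by (simp add: inner_add_right algebra_simps)
    moreover have "t * (inner a x - inner a x0) = b - 1 - inner a x0"
      using d by (simp add: t_def)
    ultimately show False using ab by fastforce
  qed
  have pos: "inner a x0 > 0" using ab x0 by force
  show ?thesis
  proof (intro exI ballI)
    fix x assume "x \<in> S"
    then show "inner (a /\<^sub>R inner a x0) x = 1" using const[OF hull_inc] pos by simp
  qed
qed simp

subsection \<open>Cones generated by state spaces\<close>

lemma pos_cone_scaleR: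
  assumes "x \<in> pos_cone \<Omega>" "0 \<le> c"
  shows "c *\<^sub>R x \<in> pos_cone \<Omega>"
proof -
  obtain d w where "x = d *\<^sub>R w" "0 \<le> d" "w \<in> \<Omega>"
    using assms(1) unfolding pos_cone_def by blast
  then show ?thesis
    using assms(2) unfolding pos_cone_def by (auto intro!: exI[of _ "c * d"] exI[of _ w])
qed

lemma subset_pos_cone: "\<Omega> \<subseteq> pos_cone \<Omega>"
  unfolding pos_cone_def by (auto intro!: exI[of _ 1])

lemma pos_cone_linear_image:
  assumes "linear f"
  shows "pos_cone (f ` \<Omega>) = f ` pos_cone \<Omega>"
proof (intro equalityI subsetI)
  fix y assume "y \<in> pos_cone (f ` \<Omega>)"
  then obtain c w where "y = c *\<^sub>R f w" "0 \<le> c" "w \<in> \<Omega>" unfolding pos_cone_def by blast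
  moreover have "c *\<^sub>R f w = f (c *\<^sub>R w)" by (simp add: linear_scale[OF assms])
  ultimately show "y \<in> f ` pos_cone \<Omega>" unfolding pos_cone_def by blast
next
  fix y assume "y \<in> f ` pos_cone \<Omega>"
  then obtain c w where "y = f (c *\<^sub>R w)" "0 \<le> c" "w \<in> \<Omega>" unfolding pos_cone_def by blast
  then show "y \<in> pos_cone (f ` \<Omega>)"
    unfolding pos_cone_def by (auto simp: linear_scale[OF assms])
qed

lemma extreme_points_subset: "extreme_points \<Omega> \<subseteq> \<Omega>"
  unfolding extreme_points_def extreme_point_of_def by blast

lemma extreme_points_linear_image:
  assumes "linear f" "inj f"
  shows "extreme_points (f ` S) = f ` extreme_points S"
proof -
  have "f x extreme_point_of f ` S \<longleftrightarrow> x extreme_point_of S" for x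
    using face_of_linear_image[OF assms, of "{x}" S] by (simp add: face_of_singleton[symmetric])
  moreover have "y extreme_point_of f ` S \<Longrightarrow> y \<in> range f" for y
    by (auto simp: extreme_point_of_def)
  ultimately show ?thesis
    unfolding extreme_points_def by blast
qed

lemma extreme_point_of_cone_summandD:
  fixes \<Omega> :: "'a::euclidean_space set"
  assumes "0 \<notin> affine hull \<Omega>" and x: "x extreme_point_of \<Omega>"
    and u: "u \<in> pos_cone \<Omega>" and v: "v \<in> pos_cone \<Omega>" and xuv: "x = u + v"
  shows "\<exists>\<alpha>. u = \<alpha> *\<^sub>R x"
proof -
  obtain a where a: "\<And>y. y \<in> \<Omega> \<Longrightarrow> inner a y = 1"
    using ex_inner_eq_1_if_0_notin_affine_hull[OF assms(1)] by blast
  obtain \<alpha> \<beta> p q where u: "u = \<alpha> *\<^sub>R p" "0 \<le> \<alpha>" "p \<in> \<Omega>"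
    and v: "v = \<beta> *\<^sub>R q" "0 \<le> \<beta>" "q \<in> \<Omega>"
    using u v unfolding pos_cone_def by blast
  have "inner a x = \<alpha> + \<beta>" using xuv u v a by (simp add: inner_add_right)
  moreover have "x \<in> \<Omega>" using x by (simp add: extreme_point_of_def)
  ultimately have sum1: "\<alpha> + \<beta> = 1" using a by simp
  consider "\<alpha> = 0" | "\<beta> = 0" | "0 < \<alpha>" "0 < \<beta>" using u v by linarith
  then show ?thesis
  proof cases
    case 1
    then show ?thesis using u by (auto intro: exI[of _ 0])
  next
    case 2
    then show ?thesis using xuv v by (auto intro: exI[of _ 1])
  next
    case 3
    have "p = q"
    proof (rule ccontr)
      assume "p \<noteq> q"
      then have "x \<in> open_segment p q"
        using 3 sum1 xuv u v by (auto simp: in_segment intro!: exI[of _ \<beta>])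
      then show False using x u v unfolding extreme_point_of_def by blast
    qed
    then have "x = p" using xuv u v sum1 by (simp flip: scaleR_add_left)
    then show ?thesis using u by blast
  qed
qed

lemma extreme_point_ofI_cone_summands:
  fixes \<Omega> :: "'a::euclidean_space set"
  assumes "0 \<notin> affine hull \<Omega>" and x: "x \<in> \<Omega>"
    and summands: "\<And>u v. u \<in> pos_cone \<Omega> \<Longrightarrow> v \<in> pos_cone \<Omega> \<Longrightarrow> x = u + v \<Longrightarrow> \<exists>\<alpha>. u = \<alpha> *\<^sub>R x"
  shows "x extreme_point_of \<Omega>"
proof -
  obtain a where a: "\<And>y. y \<in> \<Omega> \<Longrightarrow> inner a y = 1"
    using ex_inner_eq_1_if_0_notin_affine_hull[OF assms(1)] by blast
  have collinear_eq: "p = x" if "p \<in> \<Omega>" "c \<noteq> 0" "c *\<^sub>R p = \<alpha> *\<^sub>R x" for p c \<alpha>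
  proof -
    have "c = \<alpha>" using arg_cong[OF that(3), of "inner a"] a[OF that(1)] a[OF x] by simp
    then show ?thesis using that by simp
  qed
  have "x \<notin> open_segment p q" if "p \<in> \<Omega>" "q \<in> \<Omega>" for p q
  proof
    assume "x \<in> open_segment p q"
    then obtain t where t: "p \<noteq> q" "0 < t" "t < 1" "x = (1 - t) *\<^sub>R p + t *\<^sub>R q"
      by (auto simp: in_segment)
    have pK: "(1 - t) *\<^sub>R p \<in> pos_cone \<Omega>" and qK: "t *\<^sub>R q \<in> pos_cone \<Omega>"
      using that t subset_pos_cone by (auto intro!: pos_cone_scaleR)
    obtain \<alpha> where \<alpha>: "(1 - t) *\<^sub>R p = \<alpha> *\<^sub>R x" using summands[OF pK qK t(4)] by blast
    obtain \<beta> where \<beta>: "t *\<^sub>R q = \<beta> *\<^sub>R x" using summands[OF qK pK] t(4) by (metis add.commute)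
    have "p = x" by (rule collinear_eq[OF that(1) _ \<alpha>]) (use t in simp)
    moreover have "q = x" by (rule collinear_eq[OF that(2) _ \<beta>]) (use t in simp)
    ultimately show False using t(1) by blast
  qed
  then show ?thesis using x unfolding extreme_point_of_def by blast
qed

lemma cone_automorphism_extreme_ray:
  fixes \<Omega> :: "'a::euclidean_space set"
  assumes \<Omega>: "0 \<notin> affine hull \<Omega>" and S: "linear S" "inj S" "S ` pos_cone \<Omega> = pos_cone \<Omega>"
    and e: "e \<in> extreme_points \<Omega>"
  shows "\<exists>c>0. \<exists>e'\<in>extreme_points \<Omega>. S e = c *\<^sub>R e'"
proof -
  have e_ext: "e extreme_point_of \<Omega>" and "e \<in> \<Omega>"
    using e extreme_points_subset by (auto simp: extreme_points_def)
  then have "e \<noteq> 0" using \<Omega> hull_inc by fastforce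
  then have "S e \<noteq> 0" using S(1,2) linear_injective_0 by blast
  moreover have "S e \<in> pos_cone \<Omega>" using S(3) \<open>e \<in> \<Omega>\<close> subset_pos_cone by blast
  ultimately obtain c w where cw: "S e = c *\<^sub>R w" "0 < c" "w \<in> \<Omega>"
    unfolding pos_cone_def by fastforce
  have "w extreme_point_of \<Omega>"
  proof (rule extreme_point_ofI_cone_summands[OF \<Omega> cw(3)])
    fix u v assume "u \<in> pos_cone \<Omega>" "v \<in> pos_cone \<Omega>" and wuv: "w = u + v"
    then obtain u' v' where u': "u = S u'" "u' \<in> pos_cone \<Omega>" and v': "v = S v'" "v' \<in> pos_cone \<Omega>"
      using S(3) by (metis imageE)
    have "S e = S (c *\<^sub>R u' + c *\<^sub>R v')"
      using cw wuv u' v' S(1) by (simp add: linear_add linear_scale scaleR_add_right)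
    then have "e = c *\<^sub>R u' + c *\<^sub>R v'" using S(2) by (simp add: inj_eq)
    moreover have "c *\<^sub>R u' \<in> pos_cone \<Omega>" "c *\<^sub>R v' \<in> pos_cone \<Omega>"
      using u' v' cw(2) by (auto intro: pos_cone_scaleR)
    ultimately obtain \<alpha> where "c *\<^sub>R u' = \<alpha> *\<^sub>R e"
      using extreme_point_of_cone_summandD[OF \<Omega> e_ext] by blast
    then have "c *\<^sub>R u = (\<alpha> * c) *\<^sub>R w" using u' cw S(1) by (metis linear_scale scaleR_scaleR)
    then have "u = \<alpha> *\<^sub>R w" using cw(2) by (metis mult.commute scaleR_cancel_left scaleR_scaleR less_irrefl)
    then show "\<exists>\<alpha>. u = \<alpha> *\<^sub>R w" ..
  qed
  then show ?thesis using cw unfolding extreme_points_def by blast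
qed

lemma linear_nonneg_on_pos_cone_iff:
  fixes f :: "'a::euclidean_space \<Rightarrow> real"
  assumes "compact \<Omega>" "convex \<Omega>" "linear f"
  shows "(\<forall>x\<in>pos_cone \<Omega>. 0 \<le> f x) \<longleftrightarrow> (\<forall>e\<in>extreme_points \<Omega>. 0 \<le> f e)"
proof
  assume "\<forall>x\<in>pos_cone \<Omega>. 0 \<le> f x"
  then show "\<forall>e\<in>extreme_points \<Omega>. 0 \<le> f e" using extreme_points_subset subset_pos_cone by blast
next
  assume "\<forall>e\<in>extreme_points \<Omega>. 0 \<le> f e"
  then have "convex hull extreme_points \<Omega> \<subseteq> f -` {0..}"
    by (intro hull_minimal convex_linear_vimage[OF assms(3)]) auto
  then have "\<Omega> \<subseteq> f -` {0..}"
    using Krein_Milman_Minkowski[OF assms(1,2)] unfolding extreme_points_def by simp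
  then show "\<forall>x\<in>pos_cone \<Omega>. 0 \<le> f x"
    unfolding pos_cone_def using assms(3) by (auto simp: linear_scale)
qed

subsection \<open>Linear images and the symmetry group\<close>

lemma state_space_linear_image:
  fixes f :: "'a::euclidean_space \<Rightarrow> 'a"
  assumes \<Omega>: "state_space \<Omega>" and f: "linear f" "bij f"
  shows "state_space (f ` \<Omega>)"
proof -
  have bl: "bounded_linear f" using f(1) linear_conv_bounded_linear by blast
  have "compact (f ` \<Omega>)"
    using \<Omega> compact_continuous_image[OF linear_continuous_on[OF bl]] by (simp add: state_space_def)
  moreover have "convex (f ` \<Omega>)" using \<Omega> convex_linear_image[OF f(1)] by (simp add: state_space_def)
  moreover have "span (f ` \<Omega>) = UNIV"
    using \<Omega> f span_linear_image[OF f(1), of \<Omega>] by (simp add: state_space_def bij_is_surj)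
  moreover have "0 \<notin> affine hull (f ` \<Omega>)"
  proof
    assume "0 \<in> affine hull (f ` \<Omega>)"
    then obtain z where "z \<in> affine hull \<Omega>" "f z = 0"
      using affine_hull_linear_image[OF bl] by (metis imageE)
    then show False using \<Omega> f linear_injective_0 bij_is_inj by (metis state_space_def)
  qed
  ultimately show ?thesis by (simp add: state_space_def)
qed

lemma span_extreme_points:
  assumes "state_space \<Omega>"
  shows "span (extreme_points \<Omega>) = UNIV"
proof -
  have "\<Omega> = convex hull (extreme_points \<Omega>)"
    using Krein_Milman_Minkowski assms unfolding state_space_def extreme_points_def by blast
  then have "\<Omega> \<subseteq> span (extreme_points \<Omega>)" using convex_hull_subset_span by blast
  then have "span \<Omega> \<subseteq> span (extreme_points \<Omega>)" by (simp add: span_minimal)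
  then show ?thesis using assms by (auto simp: state_space_def)
qed

lemma id_in_GLs: "id \<in> GLs \<Omega>"
  by (simp add: GLs_def linear_id)

lemma GLs_extreme_points:
  assumes "T \<in> GLs \<Omega>"
  shows "T ` extreme_points \<Omega> = extreme_points \<Omega>"
proof -
  have T: "linear T" "inj T" using assms by (auto simp: GLs_def bij_is_inj)
  have T\<Omega>: "T ` \<Omega> = \<Omega>" using assms by (simp add: GLs_def)
  have "extreme_points (T ` \<Omega>) = T ` extreme_points \<Omega>" by (rule extreme_points_linear_image[OF T])
  then show ?thesis unfolding T\<Omega> by (rule sym)
qed

lemma GLs_pos_cone:
  assumes "T \<in> GLs \<Omega>"
  shows "T ` pos_cone \<Omega> = pos_cone \<Omega>"
proof -
  have T: "linear T" and T\<Omega>: "T ` \<Omega> = \<Omega>" using assms by (simp_all add: GLs_def)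
  from pos_cone_linear_image[OF T, of \<Omega>] show ?thesis unfolding T\<Omega> by (rule sym)
qed

lemma finite_GLs:
  assumes \<Omega>: "state_space \<Omega>" and fin: "finite (extreme_points \<Omega>)"
  shows "finite (GLs \<Omega>)"
proof -
  let ?E = "extreme_points \<Omega>"
  have "inj_on (\<lambda>T. restrict T ?E) (GLs \<Omega>)"
  proof (rule inj_onI)
    fix T1 T2 assume T: "T1 \<in> GLs \<Omega>" "T2 \<in> GLs \<Omega>" "restrict T1 ?E = restrict T2 ?E"
    show "T1 = T2"
    proof
      fix x
      show "T1 x = T2 x"
      proof (rule real_vector.linear_eq_on_span[of T1 T2 ?E])
        show "linear T1" "linear T2" using T by (auto simp: GLs_def)
        show "\<And>x. x \<in> ?E \<Longrightarrow> T1 x = T2 x" using T(3) by (metis restrict_apply')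
        show "x \<in> span ?E" using span_extreme_points[OF \<Omega>] by simp
      qed
    qed
  qed
  moreover have "(\<lambda>T. restrict T ?E) ` GLs \<Omega> \<subseteq> ?E \<rightarrow>\<^sub>E ?E"
    using GLs_extreme_points by fastforce
  then have "finite ((\<lambda>T. restrict T ?E) ` GLs \<Omega>)"
    by (rule finite_subset) (intro finite_PiE fin)
  ultimately show ?thesis using finite_imageD by blast
qed

lemma conj_in_GLs_linear_image:
  fixes f :: "'a::euclidean_space \<Rightarrow> 'a"
  assumes f: "linear f" "bij f" and T: "T \<in> GLs \<Omega>"
  shows "f \<circ> T \<circ> inv f \<in> GLs (f ` \<Omega>)"
proof -
  have "linear (inv f)" using eucl.inj_linear_imp_inv_linear[OF f(1) bij_is_inj[OF f(2)]] .
  then have "linear (f \<circ> T \<circ> inv f)" using T f(1) by (simp add: GLs_def linear_compose)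
  moreover have "bij (f \<circ> T \<circ> inv f)" using T f(2) by (simp add: GLs_def bij_comp bij_imp_bij_inv)
  moreover have "(f \<circ> T \<circ> inv f) ` f ` \<Omega> = f ` T ` \<Omega>"
    by (simp add: image_image inv_f_f[OF bij_is_inj[OF f(2)]])
  then have "(f \<circ> T \<circ> inv f) ` f ` \<Omega> = f ` \<Omega>"
    using T by (simp add: GLs_def)
  ultimately show ?thesis by (simp add: GLs_def)
qed

lemma transitive_ss_linear_image:
  fixes f :: "'a::euclidean_space \<Rightarrow> 'a"
  assumes f: "linear f" "bij f" and tr: "transitive_ss \<Omega>"
  shows "transitive_ss (f ` \<Omega>)"
  unfolding transitive_ss_def
proof (intro ballI)
  fix x y assume "x \<in> extreme_points (f ` \<Omega>)" "y \<in> extreme_points (f ` \<Omega>)"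
  then obtain x0 y0 where xy: "x = f x0" "y = f y0" "x0 \<in> extreme_points \<Omega>" "y0 \<in> extreme_points \<Omega>"
    using extreme_points_linear_image[OF f(1) bij_is_inj[OF f(2)]] by auto
  then obtain T where T: "T \<in> GLs \<Omega>" "T x0 = y0" using tr unfolding transitive_ss_def by blast
  have "(f \<circ> T \<circ> inv f) x = y" using xy T bij_is_inj[OF f(2)] by simp
  then show "\<exists>T\<in>GLs (f ` \<Omega>). T x = y" using conj_in_GLs_linear_image[OF f T(1)] by blast
qed

subsection \<open>Positive operators\<close>

lemma linear_funpow:
  fixes A :: "'a::real_vector \<Rightarrow> 'a"
  shows "linear A \<Longrightarrow> linear (A ^^ k)"
proof (induction k)
  case 0
  have "A ^^ 0 = id" by (rule ext) simp
  then show ?case using linear_id by metis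
next
  case (Suc k)
  then show ?case using linear_compose[of "A ^^ k" A] by (simp add: o_def)
qed

lemma inner_funpow_nonneg:
  fixes A :: "'a::real_inner \<Rightarrow> 'a"
  assumes sym: "\<And>x y. inner x (A y) = inner (A x) y" and pos: "\<And>x. 0 \<le> inner x (A x)"
  shows "0 \<le> inner x ((A ^^ k) x)"
proof (induction k arbitrary: x rule: less_induct)
  case (less k)
  consider "k = 0" | "k = 1" | j where "k = Suc (Suc j)" by (metis One_nat_def not0_implies_Suc)
  then show ?case
  proof cases
    case 3
    have "(A ^^ k) x = A ((A ^^ j) (A x))" using 3 by (simp add: funpow_swap1)
    then have "inner x ((A ^^ k) x) = inner (A x) ((A ^^ j) (A x))" using sym by simp
    also have "\<dots> \<ge> 0" using less 3 by simp
    finally show ?thesis .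
  qed (use pos in simp_all)
qed

text \<open>If \<open>A\<^sup>m e = \<mu> e\<close> with \<open>\<lambda>\<^sup>m = \<mu>\<close>, then \<open>v = A e - \<lambda> e\<close> satisfies
  \<open>\<Sum>k<m. \<lambda>\<^bsup>m-1-k\<^esup> A\<^sup>k v = A\<^sup>m e - \<lambda>\<^sup>m e = 0\<close> (a telescoping sum); pairing with \<open>v\<close>
  gives a sum of nonnegative terms whose \<open>k = 0\<close> term is \<open>\<lambda>\<^bsup>m-1\<^esup> |v|\<^sup>2\<close>.\<close>
lemma eigenvector_if_funpow_eigenvector:
  fixes A :: "'a::real_inner \<Rightarrow> 'a"
  assumes lin: "linear A" and sym: "\<And>x y. inner x (A y) = inner (A x) y"
    and pos: "\<And>x. 0 \<le> inner x (A x)"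
    and m: "0 < m" and \<mu>: "0 < \<mu>" and eq: "(A ^^ m) e = \<mu> *\<^sub>R e"
  shows "A e = root m \<mu> *\<^sub>R e"
proof -
  define l where "l = root m \<mu>"
  have l: "0 < l" "l ^ m = \<mu>" using m \<mu> by (simp_all add: l_def real_root_pow_pos2)
  define v where "v = A e - l *\<^sub>R e"
  define g where "g k = l ^ (m - k) *\<^sub>R (A ^^ k) e" for k
  have step: "l ^ (m - Suc k) *\<^sub>R (A ^^ k) v = g (Suc k) - g k" if "k < m" for k
  proof -
    have "(A ^^ k) v = (A ^^ Suc k) e - l *\<^sub>R (A ^^ k) e"
      unfolding v_def using linear_funpow[OF lin, of k]
      by (simp add: linear_diff linear_scale funpow_swap1)
    moreover have "m - k = Suc (m - Suc k)" using that by simp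
    then have "l ^ (m - k) = l ^ (m - Suc k) * l" by (simp add: mult.commute)
    ultimately show ?thesis unfolding g_def by (simp add: scaleR_diff_right)
  qed
  have "(\<Sum>k<m. l ^ (m - Suc k) * inner v ((A ^^ k) v))
      = inner v (\<Sum>k<m. l ^ (m - Suc k) *\<^sub>R (A ^^ k) v)"
    by (simp add: inner_sum_right)
  also have "(\<Sum>k<m. l ^ (m - Suc k) *\<^sub>R (A ^^ k) v) = (\<Sum>k<m. g (Suc k) - g k)"
    using step by (intro sum.cong) auto
  also have "\<dots> = g m - g 0" by (rule sum_lessThan_telescope)
  also have "\<dots> = 0" unfolding g_def using eq l by simp
  finally have "(\<Sum>k<m. l ^ (m - Suc k) * inner v ((A ^^ k) v)) = 0" by simp
  moreover have "0 \<le> l ^ (m - Suc k) * inner v ((A ^^ k) v)" for k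
    using inner_funpow_nonneg[OF sym pos] l by simp
  ultimately have "\<forall>k\<in>{..<m}. l ^ (m - Suc k) * inner v ((A ^^ k) v) = 0"
    by (simp add: sum_nonneg_eq_0_iff)
  then have "l ^ (m - Suc 0) * inner v ((A ^^ 0) v) = 0"
    using m by (auto dest: bspec[of _ _ 0])
  then have "v = 0" using l by simp
  then show ?thesis unfolding v_def l_def by simp
qed

lemma funpow_returns_to_ray:
  fixes A :: "'a::real_vector \<Rightarrow> 'a"
  assumes A: "linear A" "inj A" and E: "finite E" "\<And>x. x \<in> E \<Longrightarrow> \<exists>c>0. \<exists>y\<in>E. A x = c *\<^sub>R y"
    and e: "e \<in> E"
  shows "\<exists>m>0. \<exists>\<mu>>0. (A ^^ m) e = \<mu> *\<^sub>R e"
proof -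
  have "\<exists>c>0. \<exists>y\<in>E. (A ^^ k) e = c *\<^sub>R y" for k
  proof (induction k)
    case 0
    then show ?case using e by (auto intro!: exI[of _ 1])
  next
    case (Suc k)
    then obtain c y where "0 < c" "y \<in> E" "(A ^^ k) e = c *\<^sub>R y" by blast
    moreover obtain d z where "0 < d" "z \<in> E" "A y = d *\<^sub>R z" using E(2) \<open>y \<in> E\<close> by blast
    ultimately have "(A ^^ Suc k) e = (c * d) *\<^sub>R z" using A(1) by (simp add: linear_scale)
    then show ?case using \<open>0 < c\<close> \<open>0 < d\<close> \<open>z \<in> E\<close> by (metis mult_pos_pos)
  qed
  then obtain c r where cr: "\<And>k. 0 < c k" "\<And>k. r k \<in> E" "\<And>k. (A ^^ k) e = c k *\<^sub>R r k"
    by metis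
  have "\<not> inj r"
    using cr(2) E(1) finite_imageD[of r UNIV] finite_subset[of "range r" E] by auto
  then obtain k l where "k < l" "r k = r l"
    unfolding inj_def by (metis linorder_neqE_nat)
  define m where "m = l - k"
  have "l = k + m" using \<open>k < l\<close> by (simp add: m_def)
  then have "(A ^^ k) ((A ^^ m) e) = (A ^^ l) e" by (simp add: funpow_add)
  also have "\<dots> = (A ^^ k) ((c l / c k) *\<^sub>R e)"
    using cr(3) \<open>r k = r l\<close> cr(1)[of k] linear_funpow[OF A(1), of k] by (simp add: linear_scale)
  finally have "(A ^^ m) e = (c l / c k) *\<^sub>R e"
    using inj_fn[OF A(2), of k] by (simp add: inj_eq)
  moreover have "0 < m" "0 < c l / c k" using \<open>k < l\<close> cr(1) by (simp_all add: m_def)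
  ultimately show ?thesis by blast
qed

lemma inner_adjoint_comp_self:
  fixes T :: "'a::euclidean_space \<Rightarrow> 'b::euclidean_space"
  assumes "linear T"
  shows "inner x ((adjoint T \<circ> T) y) = inner (T x) (T y)"
  using adjoint_works[OF assms] by simp

lemma inj_adjoint_comp_self:
  fixes T :: "'a::euclidean_space \<Rightarrow> 'b::euclidean_space"
  assumes T: "linear T" "inj T"
  shows "inj (adjoint T \<circ> T)"
proof -
  have "x = 0" if "(adjoint T \<circ> T) x = 0" for x
  proof -
    have "T x = 0" using inner_adjoint_comp_self[OF T(1), of x x] that by simp
    then show "x = 0" using linear_injective_0[OF T(1)] T(2) by blast
  qed
  then show ?thesis
    using linear_injective_0[OF linear_compose[OF T(1) adjoint_linear[OF T(1)]]] by blast
qed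

lemma adjoint_comp_self_image_self_dual_cone:
  fixes T :: "'a::euclidean_space \<Rightarrow> 'a"
  assumes C: "C = internal_dual_cone inner C" and T: "linear T" "bij T" "T ` C = C"
  shows "(adjoint T \<circ> T) ` C = C"
proof -
  let ?A = "adjoint T \<circ> T"
  note A = inner_adjoint_comp_self[OF T(1)]
  have nonneg: "0 \<le> inner x y" if "x \<in> C" "y \<in> C" for x y
    using that C unfolding internal_dual_cone_def by blast
  have to_image: "?A x \<in> C" if "x \<in> C" for x
  proof -
    have "0 \<le> inner y (?A x)" if "y \<in> C" for y
    proof -
      have "T y \<in> C" "T x \<in> C" using T(3) \<open>x \<in> C\<close> that by blast+
      then show ?thesis using A nonneg by simp
    qed
    then show ?thesis using C unfolding internal_dual_cone_def by blast
  qed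
  have from_image: "x \<in> C" if "?A x \<in> C" for x
  proof -
    have "0 \<le> inner z (T x)" if "z \<in> C" for z
    proof -
      obtain z0 where "z0 \<in> C" "z = T z0" using T(3) \<open>z \<in> C\<close> by blast
      then show ?thesis using A[of z0 x] nonneg[of z0 "?A x"] \<open>?A x \<in> C\<close> by simp
    qed
    then have "T x \<in> C" using C unfolding internal_dual_cone_def by blast
    then obtain x0 where "x0 \<in> C" "T x = T x0" using T(3) by (metis imageE)
    then show ?thesis using bij_is_inj[OF T(2)] by (simp add: inj_eq)
  qed
  have "surj ?A"
    using eucl.linear_inj_imp_surj linear_compose[OF T(1) adjoint_linear[OF T(1)]]
      inj_adjoint_comp_self[OF T(1) bij_is_inj[OF T(2)]] by blast
  show ?thesis
  proof (intro equalityI subsetI)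
    fix y assume "y \<in> ?A ` C"
    then show "y \<in> C" using to_image by blast
  next
    fix y assume "y \<in> C"
    obtain x where x: "y = ?A x" using \<open>surj ?A\<close> by (metis surjD)
    then have "x \<in> C" using from_image \<open>y \<in> C\<close> by simp
    with x show "y \<in> ?A ` C" by (rule image_eqI)
  qed
qed

subsection \<open>The averaged inner product\<close>

lemma extreme_point_eigenvector_adjoint_comp:
  fixes T :: "'a::euclidean_space \<Rightarrow> 'a"
  assumes \<Omega>: "0 \<notin> affine hull \<Omega>" "finite (extreme_points \<Omega>)" "self_dual \<Omega> inner"
    and T: "linear T" "bij T" "T ` pos_cone \<Omega> = pos_cone \<Omega>"
    and e: "e \<in> extreme_points \<Omega>"
  shows "\<exists>l>0. adjoint T (T e) = l *\<^sub>R e"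
proof -
  let ?A = "adjoint T \<circ> T"
  have lin: "linear ?A" using linear_compose[OF T(1) adjoint_linear[OF T(1)]] .
  note A = inner_adjoint_comp_self[OF T(1)]
  have inj: "inj ?A" using inj_adjoint_comp_self[OF T(1) bij_is_inj[OF T(2)]] .
  have sym: "inner x (?A y) = inner (?A x) y" for x y
    using A by (simp add: inner_commute)
  have pos: "0 \<le> inner x (?A x)" for x
    using A by simp
  have cone: "?A ` pos_cone \<Omega> = pos_cone \<Omega>"
    using adjoint_comp_self_image_self_dual_cone \<Omega>(3) T unfolding self_dual_def by blast
  obtain m \<mu> where "0 < m" "0 < \<mu>" "(?A ^^ m) e = \<mu> *\<^sub>R e"
    using funpow_returns_to_ray[OF lin inj \<Omega>(2) _ e]
      cone_automorphism_extreme_ray[OF \<Omega>(1) lin inj cone] by blast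
  then have "?A e = root m \<mu> *\<^sub>R e"
    by (intro eigenvector_if_funpow_eigenvector[OF lin sym pos])
  moreover have "0 < root m \<mu>" using \<open>0 < m\<close> \<open>0 < \<mu>\<close> by simp
  ultimately show ?thesis by auto
qed

lemma linear_gl_inner_left: "linear (\<lambda>x. gl_inner \<Omega> x y)"
proof -
  have "linear (\<lambda>x. inner (T x) (T y))" if "T \<in> GLs \<Omega>" for T
    using that bounded_linear_inner_left bounded_linear.linear linear_compose[of T "\<lambda>x. inner x (T y)"]
    by (auto simp: GLs_def o_def)
  then have "linear (\<lambda>x. inverse (real (card (GLs \<Omega>))) *\<^sub>R (\<Sum>T\<in>GLs \<Omega>. inner (T x) (T y)))"
    by (intro linear_compose_scale_right linear_compose_sum) auto
  then show ?thesis by (simp add: gl_inner_def divide_inverse_commute)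
qed

lemma gl_inner_extreme_point:
  fixes \<Omega> :: "'a::euclidean_space set"
  assumes \<Omega>: "state_space \<Omega>" "finite (extreme_points \<Omega>)" "self_dual \<Omega> inner"
    and e: "e \<in> extreme_points \<Omega>"
  shows "\<exists>\<Lambda>>0. \<forall>y. gl_inner \<Omega> e y = \<Lambda> * inner e y"
proof -
  let ?G = "GLs \<Omega>"
  have G: "finite ?G" "?G \<noteq> {}" using finite_GLs[OF \<Omega>(1,2)] id_in_GLs by blast+
  have "0 \<notin> affine hull \<Omega>" using \<Omega>(1) by (simp add: state_space_def)
  then have "\<exists>l>0. adjoint T (T e) = l *\<^sub>R e" if "T \<in> ?G" for T
    using extreme_point_eigenvector_adjoint_comp[OF _ \<Omega>(2,3) _ _ GLs_pos_cone[OF that] e] that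
    by (simp add: GLs_def)
  then obtain l where l: "\<And>T. T \<in> ?G \<Longrightarrow> 0 < l T \<and> adjoint T (T e) = l T *\<^sub>R e"
    by metis
  have "inner (T e) (T y) = l T * inner e y" if "T \<in> ?G" for T y
    using l[OF that] adjoint_works[of T y "T e"] that
    by (simp add: GLs_def inner_commute)
  then have "gl_inner \<Omega> e y = ((\<Sum>T\<in>?G. l T) / real (card ?G)) * inner e y" for y
    unfolding gl_inner_def by (simp add: sum_distrib_right)
  moreover have "0 < (\<Sum>T\<in>?G. l T) / real (card ?G)"
    using G l by (intro divide_pos_pos sum_pos) (auto simp: card_gt_0_iff)
  ultimately show ?thesis by blast
qed

lemma self_dual_gl_inner:
  fixes \<Omega> :: "'a::euclidean_space set"
  assumes \<Omega>: "state_space \<Omega>" "finite (extreme_points \<Omega>)" "self_dual \<Omega> inner"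
  shows "self_dual \<Omega> (gl_inner \<Omega>)"
proof -
  have cc: "compact \<Omega>" "convex \<Omega>" using \<Omega>(1) by (simp_all add: state_space_def)
  have "(\<forall>x\<in>pos_cone \<Omega>. 0 \<le> gl_inner \<Omega> x y) \<longleftrightarrow> (\<forall>x\<in>pos_cone \<Omega>. 0 \<le> inner x y)" for y
  proof -
    have "(\<forall>x\<in>pos_cone \<Omega>. 0 \<le> gl_inner \<Omega> x y) \<longleftrightarrow> (\<forall>e\<in>extreme_points \<Omega>. 0 \<le> gl_inner \<Omega> e y)"
      using linear_nonneg_on_pos_cone_iff[OF cc linear_gl_inner_left] .
    also have "\<dots> \<longleftrightarrow> (\<forall>e\<in>extreme_points \<Omega>. 0 \<le> inner e y)"
    proof (intro ball_cong refl)
      fix e assume "e \<in> extreme_points \<Omega>"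
      then obtain \<Lambda> where "0 < \<Lambda>" "\<forall>y. gl_inner \<Omega> e y = \<Lambda> * inner e y"
        using gl_inner_extreme_point[OF \<Omega>] by blast
      then show "0 \<le> gl_inner \<Omega> e y \<longleftrightarrow> 0 \<le> inner e y" by (simp add: zero_le_mult_iff)
    qed
    also have "\<dots> \<longleftrightarrow> (\<forall>x\<in>pos_cone \<Omega>. 0 \<le> inner x y)"
      using linear_nonneg_on_pos_cone_iff[OF cc bounded_linear_inner_left[THEN bounded_linear.linear]]
      by simp
    finally show ?thesis .
  qed
  then have "internal_dual_cone (gl_inner \<Omega>) (pos_cone \<Omega>) = internal_dual_cone inner (pos_cone \<Omega>)"
    by (simp add: internal_dual_cone_def)
  with \<Omega>(3) show ?thesis unfolding self_dual_def by (rule trans[OF _ sym])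
qed

subsection \<open>Inner products as pullbacks of the Euclidean one\<close>

lemma internal_dual_cone_surj_image:
  assumes "surj f"
  shows "internal_dual_cone ip (f ` C) = f ` internal_dual_cone (\<lambda>x y. ip (f x) (f y)) C"
proof (intro equalityI subsetI)
  fix z assume z: "z \<in> internal_dual_cone ip (f ` C)"
  obtain y where y: "z = f y" using assms by (metis surjD)
  then have "y \<in> internal_dual_cone (\<lambda>x y. ip (f x) (f y)) C"
    using z by (simp add: internal_dual_cone_def)
  with y show "z \<in> f ` internal_dual_cone (\<lambda>x y. ip (f x) (f y)) C" by (rule image_eqI)
next
  fix z assume "z \<in> f ` internal_dual_cone (\<lambda>x y. ip (f x) (f y)) C"
  then show "z \<in> internal_dual_cone ip (f ` C)" by (auto simp: internal_dual_cone_def)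
qed

lemma self_dual_linear_image:
  assumes f: "linear f" "surj f" and \<Omega>: "self_dual \<Omega> (\<lambda>x y. ip (f x) (f y))"
  shows "self_dual (f ` \<Omega>) ip"
proof -
  have "pos_cone (f ` \<Omega>) = f ` pos_cone \<Omega>" using pos_cone_linear_image[OF f(1)] .
  also have "\<dots> = f ` internal_dual_cone (\<lambda>x y. ip (f x) (f y)) (pos_cone \<Omega>)"
    using \<Omega> unfolding self_dual_def by (rule arg_cong)
  also have "\<dots> = internal_dual_cone ip (f ` pos_cone \<Omega>)"
    using internal_dual_cone_surj_image[OF f(2)] by (rule sym)
  also have "\<dots> = internal_dual_cone ip (pos_cone (f ` \<Omega>))"
    using pos_cone_linear_image[OF f(1)] by simp
  finally show ?thesis unfolding self_dual_def .
qed

definition orthonormal_wrt :: "('a \<Rightarrow> 'a \<Rightarrow> real) \<Rightarrow> 'a set \<Rightarrow> bool" where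
  "orthonormal_wrt ip U \<longleftrightarrow> (\<forall>u\<in>U. \<forall>v\<in>U. ip u v = (if u = v then 1 else 0))"

context
  fixes ip :: "'a::euclidean_space \<Rightarrow> 'a \<Rightarrow> real"
  assumes ip: "is_inner_product ip"
begin

lemma ip_linear_left: "linear (\<lambda>x. ip x y)"
  using ip by (simp add: is_inner_product_def)

lemma ip_sym: "ip x y = ip y x"
  using ip by (simp add: is_inner_product_def)

lemma ip_self_eq_0_iff: "ip x x = 0 \<longleftrightarrow> x = 0"
  using ip linear_0[OF ip_linear_left] by (fastforce simp: is_inner_product_def)

lemma ip_diff_left: "ip (a - b) y = ip a y - ip b y"
  using linear_diff[OF ip_linear_left] by simp

lemma ip_scale_left: "ip (c *\<^sub>R x) y = c * ip x y"
  using linear_scale[OF ip_linear_left] by simp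

lemma ip_scale_right: "ip x (c *\<^sub>R y) = c * ip x y"
  using ip_scale_left ip_sym by metis

lemma ip_sum_left: "ip (\<Sum>u\<in>U. f u *\<^sub>R u) y = (\<Sum>u\<in>U. f u * ip u y)"
  using linear_sum[OF ip_linear_left, of "\<lambda>u. f u *\<^sub>R u" U] linear_scale[OF ip_linear_left]
  by simp

lemma orthonormal_wrt_coeff:
  assumes "finite U" "orthonormal_wrt ip U" "v \<in> U"
  shows "ip (\<Sum>u\<in>U. f u *\<^sub>R u) v = f v"
proof -
  have "ip (\<Sum>u\<in>U. f u *\<^sub>R u) v = (\<Sum>u\<in>U. if u = v then f u else 0)"
    unfolding ip_sum_left using assms(2,3) by (intro sum.cong) (auto simp: orthonormal_wrt_def)
  also have "\<dots> = f v" using assms(1,3) by (simp add: sum.delta')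
  finally show ?thesis .
qed

lemma ex_orthonormal_wrt_card:
  "n \<le> DIM('a) \<Longrightarrow> \<exists>U. finite U \<and> card U = n \<and> orthonormal_wrt ip U"
proof (induction n)
  case 0
  then show ?case by (intro exI[of _ "{}"]) (simp add: orthonormal_wrt_def)
next
  case (Suc n)
  then obtain U where U: "finite U" "card U = n" "orthonormal_wrt ip U" by auto
  have "span U \<noteq> UNIV"
  proof
    assume "span U = UNIV"
    then have "DIM('a) \<le> n" using dim_le_card'[OF U(1)] U(2) dim_UNIV dim_span[of U] by metis
    then show False using Suc.prems by simp
  qed
  then obtain v where v: "v \<notin> span U" by blast
  define w where "w = v - (\<Sum>u\<in>U. ip v u *\<^sub>R u)"
  have "w \<noteq> 0"
  proof
    assume "w = 0"
    moreover have "(\<Sum>u\<in>U. ip v u *\<^sub>R u) \<in> span U" by (intro span_sum span_scale span_base)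
    ultimately show False using v by (simp add: w_def)
  qed
  then have wpos: "0 < ip w w"
    using ip by (simp add: is_inner_product_def)
  have w_orth: "ip w u = 0" if "u \<in> U" for u
    using orthonormal_wrt_coeff[OF U(1,3) that] by (simp add: w_def ip_diff_left)
  define z where "z = w /\<^sub>R sqrt (ip w w)"
  have "sqrt (ip w w) * sqrt (ip w w) = ip w w" using wpos by simp
  then have "ip z z = 1"
    using wpos by (simp add: z_def ip_scale_left ip_scale_right field_simps)
  moreover have "ip z u = 0" "ip u z = 0" if "u \<in> U" for u
    using w_orth[OF that] ip_sym[of u w] by (simp_all add: z_def ip_scale_left ip_scale_right)
  ultimately have "orthonormal_wrt ip (insert z U)" "z \<notin> U"
    using U(3) by (auto simp: orthonormal_wrt_def)
  then show ?case using U by (intro exI[of _ "insert z U"]) simp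
qed

lemma orthonormal_wrt_expansion:
  assumes U: "finite U" "card U = DIM('a)" "orthonormal_wrt ip U"
  shows "x = (\<Sum>u\<in>U. ip x u *\<^sub>R u)"
proof -
  have "independent U"
  proof
    assume "dependent U"
    then obtain c v where "v \<in> U" "c v \<noteq> 0" "(\<Sum>v\<in>U. c v *\<^sub>R v) = 0"
      using dependent_finite[OF U(1)] by blast
    then show False
      using orthonormal_wrt_coeff[OF U(1,3), of v c] linear_0[OF ip_linear_left] by simp
  qed
  then have "span U = UNIV"
    using card_ge_dim_independent[of U UNIV] U by (auto simp: dim_UNIV)
  define z where "z = x - (\<Sum>u\<in>U. ip x u *\<^sub>R u)"
  have z_orth: "ip z u = 0" if "u \<in> U" for u
    using orthonormal_wrt_coeff[OF U(1,3) that] by (simp add: z_def ip_diff_left)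
  obtain c where "z = (\<Sum>u\<in>U. c u *\<^sub>R u)"
    using span_finite[OF U(1)] \<open>span U = UNIV\<close> by blast
  then have "ip z z = (\<Sum>u\<in>U. c u * ip u z)" by (simp add: ip_sum_left)
  also have "\<dots> = 0" using z_orth ip_sym by (intro sum.neutral) simp
  finally show ?thesis by (simp add: ip_self_eq_0_iff z_def)
qed

lemma is_inner_product_pullback_inner:
  "\<exists>\<Xi>::'a \<Rightarrow> 'a. linear \<Xi> \<and> bij \<Xi> \<and> (\<forall>x y. ip x y = inner (\<Xi> x) (\<Xi> y))"
proof -
  obtain U where U: "finite U" "card U = DIM('a)" "orthonormal_wrt ip U"
    using ex_orthonormal_wrt_card[of "DIM('a)"] by auto
  obtain \<beta> :: "'a \<Rightarrow> 'a" where \<beta>: "bij_betw \<beta> U Basis"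
    using finite_same_card_bij[OF U(1) finite_Basis] U(2) by auto
  have \<beta>_Basis: "\<beta> u \<in> Basis" and \<beta>_eq_iff: "\<beta> u = \<beta> v \<longleftrightarrow> u = v" if "u \<in> U" "v \<in> U" for u v
    using \<beta> that by (auto simp: bij_betw_def inj_on_eq_iff)
  define \<Xi> where "\<Xi> x = (\<Sum>u\<in>U. ip x u *\<^sub>R \<beta> u)" for x
  have lin: "linear \<Xi>"
    using linear_add[OF ip_linear_left] linear_scale[OF ip_linear_left]
    by (intro linearI) (simp_all add: \<Xi>_def scaleR_add_left sum.distrib scaleR_sum_right)
  have \<Xi>_basis: "inner (\<Xi> x) (\<beta> v) = ip x v" if "v \<in> U" for x v
  proof -
    have "inner (\<Xi> x) (\<beta> v) = (\<Sum>u\<in>U. if u = v then ip x u else 0)"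
      unfolding \<Xi>_def inner_sum_left using that
      by (intro sum.cong) (auto simp: inner_Basis \<beta>_Basis \<beta>_eq_iff)
    also have "\<dots> = ip x v" using U(1) that by (simp add: sum.delta')
    finally show ?thesis .
  qed
  have inner_eq: "ip x y = inner (\<Xi> x) (\<Xi> y)" for x y
  proof -
    have "inner (\<Xi> x) (\<Xi> y) = (\<Sum>u\<in>U. ip y u * ip x u)"
      unfolding \<Xi>_def[of y] inner_sum_right using \<Xi>_basis by (intro sum.cong) auto
    also have "\<dots> = (\<Sum>u\<in>U. ip y u * ip u x)" by (simp only: ip_sym[of x])
    also have "\<dots> = ip (\<Sum>u\<in>U. ip y u *\<^sub>R u) x" by (rule ip_sum_left[symmetric])
    also have "\<dots> = ip y x"
      by (rule sym[OF arg_cong[OF orthonormal_wrt_expansion[OF U, of y], of "\<lambda>t. ip t x"]])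
    also have "\<dots> = ip x y" by (rule ip_sym)
    finally show ?thesis ..
  qed
  have "inj \<Xi>"
    unfolding linear_injective_0[OF lin] using inner_eq ip_self_eq_0_iff by simp
  then have "bij \<Xi>" using eucl.linear_inj_imp_surj[OF lin] by (simp add: bij_def)
  then show ?thesis using lin inner_eq by blast
qed

end

theorem proposition2p13:
  fixes \<Omega> :: "'a::euclidean_space set"
  assumes "state_space \<Omega>"
    and "transitive_ss \<Omega>"
    and "finite (extreme_points \<Omega>)"
    and "\<exists>ip. is_inner_product ip \<and> self_dual \<Omega> ip"
  shows "\<exists>\<Xi>::'a \<Rightarrow> 'a. linear \<Xi> \<and> bij \<Xi> \<and> transitive_ss (\<Xi> ` \<Omega>) \<and> self_dual (\<Xi> ` \<Omega>) (gl_inner (\<Xi> ` \<Omega>))"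
proof -
  obtain ip where ip: "is_inner_product ip" "self_dual \<Omega> ip" using assms(4) by blast
  obtain \<Xi> :: "'a \<Rightarrow> 'a" where \<Xi>: "linear \<Xi>" "bij \<Xi>" and "\<forall>x y. ip x y = inner (\<Xi> x) (\<Xi> y)"
    using is_inner_product_pullback_inner[OF ip(1)] by blast
  then have "ip = (\<lambda>x y. inner (\<Xi> x) (\<Xi> y))" by blast
  then have "self_dual (\<Xi> ` \<Omega>) inner"
    using self_dual_linear_image[OF \<Xi>(1) bij_is_surj[OF \<Xi>(2)]] ip(2) by simp
  moreover have "state_space (\<Xi> ` \<Omega>)" using state_space_linear_image[OF assms(1) \<Xi>] .
  moreover have "finite (extreme_points (\<Xi> ` \<Omega>))"
    using extreme_points_linear_image[OF \<Xi>(1) bij_is_inj[OF \<Xi>(2)]] assms(3) by simp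
  ultimately have "self_dual (\<Xi> ` \<Omega>) (gl_inner (\<Xi> ` \<Omega>))" by (intro self_dual_gl_inner)
  moreover have "transitive_ss (\<Xi> ` \<Omega>)" using transitive_ss_linear_image[OF \<Xi> assms(2)] .
  ultimately show ?thesis using \<Xi> by blast
qed

end
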